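(* Let $N\ge 2$ and let $\mathbf{g}=\mathbf{1}_{[0,W-1]}\in\mathbb{R}^N$ be the rectangular window ($\mathbf{g}[n]=1$ for $0\le n\le W-1$, $\mathbf{g}[n]=0$ for $W\le n\le N-1$). Suppose (1) $N/2<W<N$, and (2) $N$ is coprime to each of the integers $2W-N,2W-N+1,\dots,W$ (which holds in particular if $N$ is prime). Then for every $\mathbf{x}\in\mathbb{C}^N$, the LS Algorithm described in the context, applied to the noise-free STFT magnitude $|\mathbf{X}[m,k]|^2$ of $\mathbf{x}$ with this window and $L=1$, outputs $e^{i\phi}\mathbf{x}$ for some $\phi\in\mathbb{R}$.
   Context: Signals and windows are indexed by $\{0,\dots,N-1\}$ and extended $N$-periodically. The STFT of $\mathbf{x}\in\mathbb{C}^N$ with window $\mathbf{g}$ and step $L=1$ is $\mathbf{X}[m,k]=\sum_{n=0}^{N-1}\mathbf{x}[n]\mathbf{g}[m-n]e^{-2\pi i kn/N}$ for $m,k=0,\dots,N-1$. The DFT of $\mathbf{v}\in\mathbb{C}^N$ is $(\mathbf{F}\mathbf{v})[k]=\sum_n \mathbf{v}[n]e^{-2\pi i kn/N}$. For $\mathbf{M}\in\mathbb{C}^{N\times N}$, $\mathrm{diag}(\mathbf{M},\ell)$ is the vector $(\mathbf{M}_{i,(i+\ell)\bmod N})_{i=0}^{N-1}$. LS Algorithm: given $\mathbf{Y}[m,k]$, (1) compute $\mathbf{Z}[m,\ell]=\sum_{k=0}^{N-1}\mathbf{Y}[m,k]e^{-2\pi i k\ell/N}$ and $\mathbf{z}_\ell=(\mathbf{Z}[m,\ell])_{m}$;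 (2) for each $\ell=0,\dots,N-1$ compute $\mathbf{x}_\ell=\frac1N\mathbf{G}_\ell^{-1}\mathbf{z}_\ell$, where $\mathbf{G}_\ell$ is the $N\times N$ circulant matrix with first column $(\mathbf{g}[m]\overline{\mathbf{g}[(m-\ell)\bmod N]})_{m=0}^{N-1}$ (computed via the DFT diagonalization of $\mathbf{G}_\ell$); (3) form $\mathbf{X}$ with $\mathrm{diag}(\mathbf{X},\ell)=\mathbf{x}_\ell$ for all $\ell$; (4) output $\sqrt{\lambda_{\max}}u_{\max}$, with $\lambda_{\max}$ the largest eigenvalue of $\mathbf{X}$ and $u_{\max}$ an associated unit eigenvector. *)

theory Defs
  imports "HOL-Analysis.Analysis" "Jordan_Normal_Form.Matrix" "Jordan_Normal_Form.Char_Poly"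
begin

text \<open>Signals and windows are vectors of dimension N (indices 0..N-1), extended N-periodically
  via reduction mod N.\<close>

definition per :: "nat \<Rightarrow> int \<Rightarrow> nat" where
  "per N i = nat (i mod int N)"

definition rect_window :: "nat \<Rightarrow> nat \<Rightarrow> complex vec" where
  "rect_window N W = vec N (\<lambda>n. if n < W then 1 else 0)"

text \<open>STFT with step L = 1.\<close>
definition stft :: "nat \<Rightarrow> complex vec \<Rightarrow> complex vec \<Rightarrow> nat \<Rightarrow> nat \<Rightarrow> complex" where
  "stft N g x m k = (\<Sum>n<N. x $ n * g $ per N (int m - int n)
       * exp (- 2 * pi * \<i> * of_nat k * of_nat n / of_nat N))"

definition LS_Z :: "nat \<Rightarrow> (nat \<Rightarrow> nat \<Rightarrow> complex) \<Rightarrow> nat \<Rightarrow> complex vec" where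
  "LS_Z N Y l = vec N (\<lambda>m. \<Sum>k<N. Y m k * exp (- 2 * pi * \<i> * of_nat k * of_nat l / of_nat N))"

definition LS_G :: "nat \<Rightarrow> complex vec \<Rightarrow> nat \<Rightarrow> complex mat" where
  "LS_G N g l = mat N N (\<lambda>(i, j).
      (let m = per N (int i - int j) in g $ m * cnj (g $ per N (int m - int l))))"

definition minv :: "complex mat \<Rightarrow> complex mat" where
  "minv A = (THE B. B \<in> carrier_mat (dim_row A) (dim_row A)
                 \<and> A * B = 1\<^sub>m (dim_row A) \<and> B * A = 1\<^sub>m (dim_row A))"

definition LS_x :: "nat \<Rightarrow> complex vec \<Rightarrow> (nat \<Rightarrow> nat \<Rightarrow> complex) \<Rightarrow> nat \<Rightarrow> complex vec" where
  "LS_x N g Y l = (1 / of_nat N) \<cdot>\<^sub>v (minv (LS_G N g l) *\<^sub>v LS_Z N Y l)"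

text \<open>Step (3): the matrix X with diag(X,l) = x_l, i.e. X[i,(i+l) mod N] = x_l[i].\<close>
definition LS_X :: "nat \<Rightarrow> complex vec \<Rightarrow> (nat \<Rightarrow> nat \<Rightarrow> complex) \<Rightarrow> complex mat" where
  "LS_X N g Y = mat N N (\<lambda>(i, j). LS_x N g Y (per N (int j - int i)) $ i)"

text \<open>Step (4): v is a possible output: v = sqrt(lambda_max) u_max, with lambda_max the largest
  (real) eigenvalue of X and u_max an associated unit eigenvector.\<close>
definition LS_output :: "nat \<Rightarrow> complex vec \<Rightarrow> (nat \<Rightarrow> nat \<Rightarrow> complex) \<Rightarrow> complex vec \<Rightarrow> bool" where
  "LS_output N g Y v \<longleftrightarrow>
     (\<exists>(lam :: real) u.
        eigenvector (LS_X N g Y) u (complex_of_real lam)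
      \<and> (\<forall>mu :: real. eigenvalue (LS_X N g Y) (complex_of_real mu) \<longrightarrow> mu \<le> lam)
      \<and> (\<Sum>i<N. (cmod (u $ i))\<^sup>2) = 1
      \<and> v = complex_of_real (sqrt lam) \<cdot>\<^sub>v u)"

end

theory Submission
  imports Defs
begin

text \<open>
  Squaring the STFT and applying the DFT in the frequency variable turns the data into circulant
  images of the lag products \<open>y\<^sub>l[j] = x[j] conj(x[j+l])\<close>: the \<open>l\<close>-th column of
  \<open>Z\<close> is \<open>N G\<^sub>l y\<^sub>l\<close>. A circulant matrix is diagonalised by the DFT, so
  \<open>G\<^sub>l\<close> is invertible as soon as the DFT of its first column has no zeros. For the
  rectangular window this DFT is a sum of at most two geometric progressions in an \<open>N\<close>-th
  root of unity, and the coprimality conditions (which also force \<open>N\<close> to be odd) keep it away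
  from zero. Hence step (2) recovers every \<open>y\<^sub>l\<close>, step (3) produces the rank-one matrix
  \<open>x x\<^sup>*\<close>, whose only nonzero eigenvalue is \<open>\<parallel>x\<parallel>\<^sup>2\<close> with eigenvectors the
  multiples of \<open>x\<close>, and step (4) returns \<open>x\<close> up to a unimodular factor.
\<close>

section \<open>Roots of unity and the discrete Fourier transform\<close>

definition unity_root :: "nat \<Rightarrow> int \<Rightarrow> complex" where
  "unity_root N t = exp (2 * pi * \<i> * of_int t / of_nat N)"

lemma unity_root_add: "unity_root N (a + b) = unity_root N a * unity_root N b"
  unfolding unity_root_def by (simp add: exp_add[symmetric] add_divide_distrib distrib_left)

lemma unity_root_0 [simp]: "unity_root N 0 = 1"
  unfolding unity_root_def by simp

lemma unity_root_pow: "unity_root N a ^ n = unity_root N (int n * a)"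
  unfolding unity_root_def by (simp add: exp_of_nat_mult[symmetric] mult_ac)

lemma unity_root_cnj: "cnj (unity_root N a) = unity_root N (- a)"
  unfolding unity_root_def by (simp add: exp_cnj)

lemma exp_eq_unity_root:
  "exp (- 2 * pi * \<i> * of_nat k * of_nat n / of_nat N) = unity_root N (- (int k * int n))"
  unfolding unity_root_def by (simp add: mult_ac)

lemma unity_root_eq_1_iff:
  assumes "N > 0"
  shows "unity_root N t = 1 \<longleftrightarrow> int N dvd t"
proof -
  have "unity_root N t = 1 \<longleftrightarrow> (\<exists>n::int. 2 * pi * of_int t / of_nat N = 2 * pi * of_int n)"
    unfolding unity_root_def exp_eq_1 by (simp add: mult_ac)
  also have "\<dots> \<longleftrightarrow> (\<exists>n::int. of_int t = of_nat N * (of_int n :: real))"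
    using assms by (auto simp: field_simps)
  also have "\<dots> \<longleftrightarrow> (\<exists>n::int. t = int N * n)"
    by (metis of_int_eq_iff of_int_mult of_int_of_nat_eq)
  finally show ?thesis
    by (auto simp: dvd_def)
qed

lemma unity_root_mod:
  assumes "N > 0"
  shows "unity_root N (t mod int N) = unity_root N t"
proof -
  have "unity_root N t = unity_root N (t mod int N) * unity_root N (int N * (t div int N))"
    by (metis unity_root_add mod_mult_div_eq mult.commute)
  then show ?thesis
    using unity_root_eq_1_iff[OF assms] by simp
qed

lemma sum_unity_root_diff:
  assumes "n < N"
  shows "(\<Sum>k<N. unity_root N (int k * (int n - int j))) = (if n = j mod N then of_nat N else 0)"
proof -
  have N: "N > 0"
    using assms by simp
  have dvd_iff: "int N dvd (int n - int j) \<longleftrightarrow> n = j mod N"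
  proof -
    have "int N dvd (int n - int j) \<longleftrightarrow> n mod N = j mod N"
      by (metis mod_eq_dvd_iff of_nat_eq_iff zmod_int)
    then show ?thesis
      using assms by simp
  qed
  show ?thesis
  proof (cases "n = j mod N")
    case True
    then have "unity_root N (int k * (int n - int j)) = 1" for k
      using dvd_iff unity_root_eq_1_iff[OF N] by simp
    then have "(\<Sum>k<N. unity_root N (int k * (int n - int j))) = of_nat N"
      by simp
    with True show ?thesis
      by simp
  next
    case False
    let ?q = "unity_root N (int n - int j)"
    have "?q \<noteq> 1"
      using False dvd_iff unity_root_eq_1_iff[OF N] by simp
    moreover have "?q ^ N = 1"
      using unity_root_eq_1_iff[OF N] by (simp add: unity_root_pow)
    ultimately have "(\<Sum>k<N. ?q ^ k) = 0"
      by (simp add: sum_gp_strict)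
    then show ?thesis
      using False by (simp add: unity_root_pow)
  qed
qed

definition dft :: "nat \<Rightarrow> (nat \<Rightarrow> complex) \<Rightarrow> nat \<Rightarrow> complex" where
  "dft N f k = (\<Sum>n<N. f n * unity_root N (- (int k * int n)))"

lemma dft_inversion:
  assumes "n < N"
  shows "(\<Sum>k<N. unity_root N (int k * int n) * dft N f k) = of_nat N * f n"
proof -
  have "(\<Sum>k<N. unity_root N (int k * int n) * dft N f k)
      = (\<Sum>j<N. f j * (\<Sum>k<N. unity_root N (int k * (int n - int j))))"
    unfolding dft_def sum_distrib_left
    by (subst sum.swap) (simp add: unity_root_add[symmetric] algebra_simps)
  also have "\<dots> = (\<Sum>j<N. if j = n then of_nat N * f n else 0)"
    using assms by (intro sum.cong refl) (auto simp: sum_unity_root_diff)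
  finally show ?thesis
    using assms by simp
qed

lemma dft_eq_0_imp_eq_0:
  assumes "\<And>k. k < N \<Longrightarrow> dft N f k = 0" and "n < N"
  shows "f n = 0"
  using dft_inversion[OF \<open>n < N\<close>, of f] assms by simp

text \<open>Step (1) applied to \<open>|dft a|\<^sup>2\<close> yields the autocorrelation of \<open>a\<close> at lag \<open>l\<close>.\<close>
lemma sum_dft_sq_shift:
  assumes "N > 0"
  shows "(\<Sum>k<N. dft N a k * cnj (dft N a k) * unity_root N (- (int k * int l)))
       = of_nat N * (\<Sum>n<N. a n * cnj (a ((n + l) mod N)))"
proof -
  have "(\<Sum>k<N. dft N a k * cnj (dft N a k) * unity_root N (- (int k * int l)))
      = (\<Sum>k<N. \<Sum>n<N. \<Sum>n'<N. a n * cnj (a n') * unity_root N (int k * (int n' - int n - int l)))"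
    unfolding dft_def cnj_sum complex_cnj_mult unity_root_cnj
    by (simp add: sum_distrib_left sum_distrib_right unity_root_add[symmetric] algebra_simps)
      (rule sum.cong[OF refl], rule sum.swap)
  also have "\<dots> = (\<Sum>n<N. \<Sum>n'<N. a n * cnj (a n') * (\<Sum>k<N. unity_root N (int k * (int n' - int n - int l))))"
    by (subst sum.swap, rule sum.cong, simp, subst sum.swap, simp add: sum_distrib_left)
  also have "\<dots> = (\<Sum>n<N. \<Sum>n'<N. if n' = (n + l) mod N then of_nat N * (a n * cnj (a n')) else 0)"
    using sum_unity_root_diff[of _ N "_ + l"] by (intro sum.cong refl) (simp add: algebra_simps)
  also have "\<dots> = of_nat N * (\<Sum>n<N. a n * cnj (a ((n + l) mod N)))"
    using assms by (simp add: sum_distrib_left)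
  finally show ?thesis .
qed

lemma per_less: "N > 0 \<Longrightarrow> per N t < N"
  unfolding per_def by (simp add: nat_less_iff)

lemma of_nat_per: "N > 0 \<Longrightarrow> int (per N t) = t mod int N"
  unfolding per_def by simp

lemma per_of_nat: "n < N \<Longrightarrow> per N (int n) = n"
  unfolding per_def by (simp add: nat_mod_as_int[symmetric])

lemma per_mod: "per N (t mod int N) = per N t"
  unfolding per_def by simp

lemma per_diff_per:
  assumes "N > 0"
  shows "per N (int (per N (int m - int n)) - int l) = per N (int m - int ((n + l) mod N))"
proof -
  have "(int (per N (int m - int n)) - int l) mod int N = (int m - int (n + l)) mod int N"
    using of_nat_per[OF assms] by (simp add: mod_diff_left_eq algebra_simps)
  also have "\<dots> = (int m - int ((n + l) mod N)) mod int N"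
    by (simp add: zmod_int mod_diff_right_eq)
  finally show ?thesis
    unfolding per_def by simp
qed

lemma add_per_diff_mod:
  assumes "i < N" "j < N"
  shows "(i + per N (int j - int i)) mod N = j"
proof -
  have "int ((i + per N (int j - int i)) mod N) = (int i + (int j - int i) mod int N) mod int N"
    using assms of_nat_per[of N] by (simp add: zmod_int)
  also have "\<dots> = int j"
    using assms by (simp add: mod_add_right_eq)
  finally show ?thesis
    by simp
qed

lemma per_diff_eq:
  assumes "p < N" "l < N"
  shows "per N (int p - int l) = (if l \<le> p then p - l else p + N - l)"
proof (cases "l \<le> p")
  case True
  then have "(int p - int l) mod int N = int p - int l"
    using assms by (intro mod_pos_pos_trivial) auto
  with True show ?thesis
    unfolding per_def by simp
next
  case False
  have "(int p - int l) mod int N = (int p - int l + int N) mod int N"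
    by simp
  also have "\<dots> = int p - int l + int N"
    using assms False by (intro mod_pos_pos_trivial) auto
  finally show ?thesis
    using False unfolding per_def by simp
qed

lemma sum_shift_periodic:
  fixes f :: "int \<Rightarrow> 'a::comm_monoid_add"
  assumes N: "N > 0" and periodic: "\<And>t. f (t mod int N) = f t"
  shows "(\<Sum>m<N. f (int m + s)) = (\<Sum>m<N. f (int m))"
proof -
  define h where "h m = nat ((int m + s) mod int N)" for m
  have bij: "bij_betw h {..<N} {..<N}"
  proof (rule bij_betw_byWitness[where f' = "\<lambda>p. nat ((int p - s) mod int N)"])
    show "\<forall>a\<in>{..<N}. nat ((int (h a) - s) mod int N) = a"
      using N by (auto simp: h_def mod_diff_left_eq nat_mod_as_int)
    show "\<forall>a\<in>{..<N}. h (nat ((int a - s) mod int N)) = a"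
      using N by (auto simp: h_def mod_add_left_eq nat_mod_as_int)
    show "h ` {..<N} \<subseteq> {..<N}" "(\<lambda>p. nat ((int p - s) mod int N)) ` {..<N} \<subseteq> {..<N}"
      using N by (auto simp: h_def nat_less_iff)
  qed
  have "(\<Sum>m<N. f (int m + s)) = (\<Sum>m<N. f (int (h m)))"
    using N by (intro sum.cong refl) (simp add: h_def periodic)
  also have "\<dots> = (\<Sum>m<N. f (int m))"
    using sum.reindex_bij_betw[OF bij, of "\<lambda>p. f (int p)"] by simp
  finally show ?thesis .
qed

section \<open>The circulant matrices \<open>G\<^sub>l\<close>\<close>

definition LS_G_col :: "nat \<Rightarrow> complex vec \<Rightarrow> nat \<Rightarrow> nat \<Rightarrow> complex" where
  "LS_G_col N g l p = g $ p * cnj (g $ per N (int p - int l))"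

lemma LS_G_carrier: "LS_G N g l \<in> carrier_mat N N"
  unfolding LS_G_def by simp

lemma LS_G_mult_vec_index:
  assumes "m < N" "v \<in> carrier_vec N"
  shows "(LS_G N g l *\<^sub>v v) $ m = (\<Sum>j<N. LS_G_col N g l (per N (int m - int j)) * v $ j)"
  using assms unfolding LS_G_def LS_G_col_def
  by (simp add: index_mult_mat_vec scalar_prod_def atLeast0LessThan Let_def)

text \<open>Convolution theorem: the DFT diagonalises every \<open>G\<^sub>l\<close>.\<close>
lemma dft_LS_G_mult_vec:
  assumes N: "N > 0" and v: "v \<in> carrier_vec N"
  shows "dft N (\<lambda>m. (LS_G N g l *\<^sub>v v) $ m) k = dft N (LS_G_col N g l) k * dft N (\<lambda>j. v $ j) k"
proof -
  define f where "f t = LS_G_col N g l (per N t) * unity_root N (- (int k * t))" for t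
  have periodic: "f (t mod int N) = f t" for t
  proof -
    have "(- (int k * (t mod int N))) mod int N = (- (int k * t)) mod int N"
      by (metis mod_minus_eq mod_mult_right_eq)
    then show ?thesis
      unfolding f_def using unity_root_mod[OF N] per_mod by metis
  qed
  have shifted: "(\<Sum>m<N. LS_G_col N g l (per N (int m - int j)) * unity_root N (- (int k * int m)))
      = unity_root N (- (int k * int j)) * dft N (LS_G_col N g l) k" for j
  proof -
    have "(\<Sum>m<N. LS_G_col N g l (per N (int m - int j)) * unity_root N (- (int k * int m)))
        = unity_root N (- (int k * int j)) * (\<Sum>m<N. f (int m + - int j))"
      unfolding sum_distrib_left f_def by (intro sum.cong refl) (simp add: unity_root_add[symmetric] algebra_simps)
    also have "(\<Sum>m<N. f (int m + - int j)) = (\<Sum>m<N. f (int m))"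
      by (rule sum_shift_periodic[of N f, OF N periodic])
    also have "\<dots> = dft N (LS_G_col N g l) k"
      unfolding dft_def f_def by (simp add: per_of_nat)
    finally show ?thesis .
  qed
  have "dft N (\<lambda>m. (LS_G N g l *\<^sub>v v) $ m) k
      = (\<Sum>m<N. (\<Sum>j<N. LS_G_col N g l (per N (int m - int j)) * v $ j) * unity_root N (- (int k * int m)))"
    unfolding dft_def by (intro sum.cong refl) (simp add: LS_G_mult_vec_index[OF _ v])
  also have "\<dots> = (\<Sum>j<N. v $ j * (\<Sum>m<N. LS_G_col N g l (per N (int m - int j)) * unity_root N (- (int k * int m))))"
    unfolding sum_distrib_left sum_distrib_right by (subst sum.swap) (simp add: mult_ac)
  also have "\<dots> = (\<Sum>j<N. v $ j * unity_root N (- (int k * int j))) * dft N (LS_G_col N g l) k"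
    unfolding shifted sum_distrib_right by (simp add: mult.assoc)
  also have "\<dots> = dft N (LS_G_col N g l) k * dft N (\<lambda>j. v $ j) k"
    by (simp add: dft_def mult.commute)
  finally show ?thesis .
qed

lemma LS_G_mult_vec_eq_0_imp_eq_0:
  assumes N: "N > 0" and dft_nonzero: "\<And>k. k < N \<Longrightarrow> dft N (LS_G_col N g l) k \<noteq> 0"
    and v: "v \<in> carrier_vec N" and kernel: "LS_G N g l *\<^sub>v v = 0\<^sub>v N"
  shows "v = 0\<^sub>v N"
proof (rule eq_vecI)
  have "dft N (\<lambda>j. v $ j) k = 0" if "k < N" for k
    using dft_LS_G_mult_vec[OF N v, of g l k] dft_nonzero[OF that] by (simp add: kernel dft_def)
  then show "v $ n = 0\<^sub>v N $ n" if "n < dim_vec (0\<^sub>v N :: complex vec)" for n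
    using dft_eq_0_imp_eq_0[of N "\<lambda>j. v $ j" n] that by simp
qed (use v in simp)

lemma minv_eqI:
  assumes A: "A \<in> carrier_mat n n" and B: "B \<in> carrier_mat n n"
    and AB: "A * B = 1\<^sub>m n" and BA: "B * A = 1\<^sub>m n"
  shows "minv A = B"
  unfolding minv_def
proof (rule the_equality)
  show "B \<in> carrier_mat (dim_row A) (dim_row A) \<and> A * B = 1\<^sub>m (dim_row A) \<and> B * A = 1\<^sub>m (dim_row A)"
    using assms by simp
  fix B' assume "B' \<in> carrier_mat (dim_row A) (dim_row A) \<and> A * B' = 1\<^sub>m (dim_row A) \<and> B' * A = 1\<^sub>m (dim_row A)"
  then have B': "B' \<in> carrier_mat n n" "A * B' = 1\<^sub>m n"
    using A by auto
  have "B' = (B * A) * B'"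
    using B' BA by simp
  also have "\<dots> = B * (A * B')"
    using A B B' by (simp add: assoc_mult_mat)
  finally show "B' = B"
    using B B' by simp
qed

lemma LS_G_inverse:
  assumes N: "N > 0" and dft_nonzero: "\<And>k. k < N \<Longrightarrow> dft N (LS_G_col N g l) k \<noteq> 0"
  shows "invertible_mat (LS_G N g l)" and "minv (LS_G N g l) \<in> carrier_mat N N"
    and "minv (LS_G N g l) * LS_G N g l = 1\<^sub>m N"
proof -
  let ?G = "LS_G N g l"
  have G: "?G \<in> carrier_mat N N"
    by (rule LS_G_carrier)
  have "det ?G \<noteq> 0"
    using det_0_iff_vec_prod_zero_field[OF G] LS_G_mult_vec_eq_0_imp_eq_0[OF N dft_nonzero] by blast
  then obtain B where B: "B \<in> carrier_mat N N" "?G * B = 1\<^sub>m N" "B * ?G = 1\<^sub>m N"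
    using det_non_zero_imp_unit[OF G, of "()"] unfolding Units_def ring_mat_def by auto
  then show "invertible_mat ?G"
    using G by (auto simp: invertible_mat_def inverts_mat_def)
  show "minv ?G \<in> carrier_mat N N" "minv ?G * ?G = 1\<^sub>m N"
    using minv_eqI[OF G B] B by simp_all
qed

section \<open>Steps (1)--(3) on noise-free data\<close>

text \<open>In the paper's notation \<open>lag_product N x l = diag(x x\<^sup>*, l)\<close>.\<close>
definition lag_product :: "nat \<Rightarrow> complex vec \<Rightarrow> nat \<Rightarrow> complex vec" where
  "lag_product N x l = vec N (\<lambda>j. x $ j * cnj (x $ ((j + l) mod N)))"

lemma lag_product_carrier: "lag_product N x l \<in> carrier_vec N"
  unfolding lag_product_def by simp

lemma stft_eq_dft: "stft N g x m k = dft N (\<lambda>n. x $ n * g $ per N (int m - int n)) k"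
  unfolding stft_def dft_def exp_eq_unity_root ..

lemma LS_G_mult_lag_product_index:
  assumes N: "N > 0" and "m < N"
  shows "(LS_G N g l *\<^sub>v lag_product N x l) $ m
       = (\<Sum>n<N. (x $ n * g $ per N (int m - int n))
                 * cnj (x $ ((n + l) mod N) * g $ per N (int m - int ((n + l) mod N))))"
proof -
  have "(LS_G N g l *\<^sub>v lag_product N x l) $ m
      = (\<Sum>j<N. LS_G_col N g l (per N (int m - int j)) * lag_product N x l $ j)"
    by (rule LS_G_mult_vec_index[OF \<open>m < N\<close> lag_product_carrier])
  also have "\<dots> = (\<Sum>n<N. (x $ n * g $ per N (int m - int n))
                 * cnj (x $ ((n + l) mod N) * g $ per N (int m - int ((n + l) mod N))))"
    unfolding LS_G_col_def lag_product_def by (intro sum.cong refl) (simp add: per_diff_per[OF N] mult_ac)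
  finally show ?thesis .
qed

lemma LS_Z_stft_sq:
  assumes N: "N > 0"
  shows "LS_Z N (\<lambda>m k. complex_of_real ((cmod (stft N g x m k))\<^sup>2)) l
       = of_nat N \<cdot>\<^sub>v (LS_G N g l *\<^sub>v lag_product N x l)"
proof (rule eq_vecI)
  fix m assume "m < dim_vec (of_nat N \<cdot>\<^sub>v (LS_G N g l *\<^sub>v lag_product N x l))"
  then have m: "m < N"
    by (simp add: LS_G_def)
  show "LS_Z N (\<lambda>m k. complex_of_real ((cmod (stft N g x m k))\<^sup>2)) l $ m
      = (of_nat N \<cdot>\<^sub>v (LS_G N g l *\<^sub>v lag_product N x l)) $ m"
    using m LS_G_carrier[of N g l]
    unfolding LS_Z_def index_vec[OF m] complex_norm_square stft_eq_dft exp_eq_unity_root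
      sum_dft_sq_shift[OF N] by (simp add: LS_G_mult_lag_product_index[OF N m])
qed (simp add: LS_Z_def LS_G_def)

lemma LS_x_stft_sq:
  assumes N: "N > 0" and dft_nonzero: "\<And>k. k < N \<Longrightarrow> dft N (LS_G_col N g l) k \<noteq> 0"
  shows "LS_x N g (\<lambda>m k. complex_of_real ((cmod (stft N g x m k))\<^sup>2)) l = lag_product N x l"
proof -
  let ?G = "LS_G N g l" and ?y = "lag_product N x l"
  have G: "?G \<in> carrier_mat N N" and Ginv: "minv ?G \<in> carrier_mat N N"
    using LS_G_carrier LS_G_inverse[OF N dft_nonzero] by blast+
  have "minv ?G *\<^sub>v (of_nat N \<cdot>\<^sub>v (?G *\<^sub>v ?y)) = of_nat N \<cdot>\<^sub>v ((minv ?G * ?G) *\<^sub>v ?y)"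
    using G Ginv lag_product_carrier by (simp add: mult_mat_vec assoc_mult_mat_vec)
  also have "\<dots> = of_nat N \<cdot>\<^sub>v ?y"
    using lag_product_carrier by (simp add: LS_G_inverse(3)[OF N dft_nonzero])
  finally show ?thesis
    unfolding LS_x_def LS_Z_stft_sq[OF N] using N by (simp add: smult_smult_assoc)
qed

definition outer_mat :: "complex vec \<Rightarrow> complex mat" where
  "outer_mat x = mat (dim_vec x) (dim_vec x) (\<lambda>(i, j). x $ i * cnj (x $ j))"

lemma LS_X_stft_sq:
  assumes N: "N > 0" and x: "x \<in> carrier_vec N"
    and dft_nonzero: "\<And>l k. l < N \<Longrightarrow> k < N \<Longrightarrow> dft N (LS_G_col N g l) k \<noteq> 0"
  shows "LS_X N g (\<lambda>m k. complex_of_real ((cmod (stft N g x m k))\<^sup>2)) = outer_mat x"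
proof (rule eq_matI)
  fix i j assume "i < dim_row (outer_mat x)" "j < dim_col (outer_mat x)"
  then have i: "i < N" and j: "j < N"
    using x by (auto simp: outer_mat_def)
  then show "LS_X N g (\<lambda>m k. complex_of_real ((cmod (stft N g x m k))\<^sup>2)) $$ (i, j) = outer_mat x $$ (i, j)"
    using x LS_x_stft_sq[OF N dft_nonzero] per_less[OF N]
    by (simp add: LS_X_def outer_mat_def lag_product_def add_per_diff_mod)
qed (use x in \<open>simp_all add: LS_X_def outer_mat_def\<close>)

section \<open>Leading eigenpairs of a rank-one matrix\<close>

definition sq_norm :: "complex vec \<Rightarrow> real" where
  "sq_norm x = (\<Sum>i<dim_vec x. (cmod (x $ i))\<^sup>2)"

lemma sq_norm_nonneg: "sq_norm x \<ge> 0"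
  unfolding sq_norm_def by (simp add: sum_nonneg)

lemma sq_norm_eq_0_iff: "sq_norm x = 0 \<longleftrightarrow> x = 0\<^sub>v (dim_vec x)"
proof -
  have "sq_norm x = 0 \<longleftrightarrow> (\<forall>i<dim_vec x. x $ i = 0)"
    unfolding sq_norm_def by (subst sum_nonneg_eq_0_iff) auto
  also have "\<dots> \<longleftrightarrow> x = 0\<^sub>v (dim_vec x)"
    by (metis eq_vecI index_zero_vec dim_vec)
  finally show ?thesis .
qed

lemma sq_norm_smult: "sq_norm (a \<cdot>\<^sub>v x) = (cmod a)\<^sup>2 * sq_norm x"
  unfolding sq_norm_def by (simp add: sum_distrib_left norm_mult power_mult_distrib)

lemma cscalar_prod_self: "x \<bullet>c x = complex_of_real (sq_norm x)"
  unfolding sq_norm_def scalar_prod_def of_real_sum complex_norm_square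
  by (simp add: atLeast0LessThan)

lemma outer_mat_mult_vec:
  assumes "u \<in> carrier_vec (dim_vec x)"
  shows "outer_mat x *\<^sub>v u = (u \<bullet>c x) \<cdot>\<^sub>v x"
proof (rule eq_vecI)
  fix i assume "i < dim_vec ((u \<bullet>c x) \<cdot>\<^sub>v x)"
  then show "(outer_mat x *\<^sub>v u) $ i = ((u \<bullet>c x) \<cdot>\<^sub>v x) $ i"
    using assms by (simp add: outer_mat_def scalar_prod_def sum_distrib_left mult_ac)
qed (simp add: outer_mat_def)

lemma eigenvector_outer_mat:
  assumes ev: "eigenvector (outer_mat x) u mu" and mu: "mu \<noteq> 0"
  shows "mu = complex_of_real (sq_norm x) \<and> (\<exists>b. u = b \<cdot>\<^sub>v x)"
proof -
  have u: "u \<in> carrier_vec (dim_vec x)" and u0: "u \<noteq> 0\<^sub>v (dim_vec x)"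
    and eq: "(u \<bullet>c x) \<cdot>\<^sub>v x = mu \<cdot>\<^sub>v u"
    using ev outer_mat_mult_vec[of u x] unfolding eigenvector_def by (auto simp: outer_mat_def)
  define b where "b = (u \<bullet>c x) / mu"
  have ub: "u = b \<cdot>\<^sub>v x"
  proof (rule eq_vecI)
    show "u $ i = (b \<cdot>\<^sub>v x) $ i" if "i < dim_vec (b \<cdot>\<^sub>v x)" for i
      using that u mu arg_cong[OF eq, of "\<lambda>v. v $ i"] by (simp add: b_def field_simps)
  qed (use u in simp)
  have "b \<noteq> 0"
    using u0 ub by auto
  moreover have "mu * b = b * complex_of_real (sq_norm x)"
  proof -
    have "mu * b = u \<bullet>c x"
      using mu by (simp add: b_def)
    also have "\<dots> = b * (x \<bullet>c x)"
      by (simp add: ub)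
    finally show ?thesis
      by (simp add: cscalar_prod_self)
  qed
  ultimately show ?thesis
    using ub by auto
qed

lemma eigenvalue_outer_mat_le:
  assumes "eigenvalue (outer_mat x) (complex_of_real mu)"
  shows "mu \<le> sq_norm x"
  using assms eigenvector_outer_mat[of x _ "complex_of_real mu"] sq_norm_nonneg[of x]
  unfolding eigenvalue_def by fastforce

lemma eigenvector_smult:
  fixes A :: "'a :: field mat"
  assumes A: "A \<in> carrier_mat n n" and ev: "eigenvector A v k" and a: "a \<noteq> 0"
  shows "eigenvector A (a \<cdot>\<^sub>v v) k"
proof -
  have v: "v \<in> carrier_vec n" "v \<noteq> 0\<^sub>v n" and Av: "A *\<^sub>v v = k \<cdot>\<^sub>v v"
    using ev A unfolding eigenvector_def by auto
  have "a \<cdot>\<^sub>v v \<noteq> 0\<^sub>v n"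
  proof
    assume "a \<cdot>\<^sub>v v = 0\<^sub>v n"
    then have "(1 / a) \<cdot>\<^sub>v (a \<cdot>\<^sub>v v) = 0\<^sub>v n"
      by (auto intro!: eq_vecI)
    then show False
      using v a by (simp add: smult_smult_assoc)
  qed
  moreover have "A *\<^sub>v (a \<cdot>\<^sub>v v) = k \<cdot>\<^sub>v (a \<cdot>\<^sub>v v)"
    using A v Av by (simp add: mult_mat_vec smult_smult_assoc mult.commute)
  ultimately show ?thesis
    using A v unfolding eigenvector_def by simp
qed

lemma outer_mat_carrier: "x \<in> carrier_vec n \<Longrightarrow> outer_mat x \<in> carrier_mat n n"
  unfolding outer_mat_def by simp

lemma eigenvector_outer_mat_self:
  assumes "x \<noteq> 0\<^sub>v (dim_vec x)"
  shows "eigenvector (outer_mat x) x (complex_of_real (sq_norm x))"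
  using assms outer_mat_mult_vec[of x x] unfolding eigenvector_def
  by (simp add: outer_mat_def cscalar_prod_self)

lemma LS_output_exists_outer_mat:
  assumes N: "N > 0" and x: "x \<in> carrier_vec N" and X: "LS_X N g Y = outer_mat x"
  shows "\<exists>v. LS_output N g Y v"
proof (cases "x = 0\<^sub>v N")
  case True
  have s: "sq_norm x = 0"
    using True sq_norm_eq_0_iff by simp
  have "outer_mat x *\<^sub>v unit_vec N 0 = 0 \<cdot>\<^sub>v unit_vec N 0"
    using True by (auto intro!: eq_vecI simp: outer_mat_mult_vec)
  then have "eigenvector (outer_mat x) (unit_vec N 0) (complex_of_real 0)"
    using N x by (auto simp: eigenvector_def outer_mat_def)
  moreover have "(\<Sum>i<N. (cmod (unit_vec N 0 $ i))\<^sup>2) = 1"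
    using N by (simp add: unit_vec_def if_distrib[of "\<lambda>z. (cmod z)\<^sup>2"] cong: if_cong)
  moreover have "\<forall>mu. eigenvalue (outer_mat x) (complex_of_real mu) \<longrightarrow> mu \<le> 0"
    using eigenvalue_outer_mat_le[of x] s by metis
  ultimately show ?thesis
    unfolding LS_output_def X by blast
next
  case False
  let ?s = "sq_norm x"
  have s: "?s > 0"
    using False x sq_norm_eq_0_iff[of x] sq_norm_nonneg[of x] by auto
  define u where "u = complex_of_real (1 / sqrt ?s) \<cdot>\<^sub>v x"
  have "eigenvector (outer_mat x) u (complex_of_real ?s)"
    unfolding u_def using x False s
    by (intro eigenvector_smult[OF outer_mat_carrier] eigenvector_outer_mat_self) auto
  moreover have "(\<Sum>i<N. (cmod (u $ i))\<^sup>2) = 1"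
  proof -
    have "sq_norm u = 1"
      using s unfolding u_def sq_norm_smult by (simp add: norm_divide power_divide)
    then show ?thesis
      using x by (simp add: sq_norm_def u_def)
  qed
  moreover have "\<forall>mu. eigenvalue (outer_mat x) (complex_of_real mu) \<longrightarrow> mu \<le> ?s"
    using eigenvalue_outer_mat_le by blast
  ultimately show ?thesis
    unfolding LS_output_def X by blast
qed

lemma LS_output_outer_mat_unique_up_to_phase:
  assumes x: "x \<in> carrier_vec N" and X: "LS_X N g Y = outer_mat x" and v: "LS_output N g Y v"
  shows "\<exists>phi :: real. v = exp (\<i> * complex_of_real phi) \<cdot>\<^sub>v x"
proof -
  obtain lam u where ev: "eigenvector (outer_mat x) u (complex_of_real lam)"
    and top: "\<forall>mu. eigenvalue (outer_mat x) (complex_of_real mu) \<longrightarrow> mu \<le> lam"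
    and unit: "(\<Sum>i<N. (cmod (u $ i))\<^sup>2) = 1" and v_eq: "v = complex_of_real (sqrt lam) \<cdot>\<^sub>v u"
    using v unfolding LS_output_def X by blast
  have u: "u \<in> carrier_vec N"
    using ev x by (simp add: eigenvector_def outer_mat_def)
  show ?thesis
  proof (cases "x = 0\<^sub>v N")
    case True
    then have "lam = 0"
      using eigenvector_outer_mat[OF ev] x sq_norm_eq_0_iff by fastforce
    then show ?thesis
      using True u v_eq by (auto intro!: eq_vecI)
  next
    case False
    let ?s = "sq_norm x"
    have s: "?s > 0"
      using False x sq_norm_eq_0_iff[of x] sq_norm_nonneg[of x] by auto
    have "?s \<le> lam"
      using top eigenvector_outer_mat_self[of x] False x unfolding eigenvalue_def by auto
    then obtain b where lam: "lam = ?s" and ub: "u = b \<cdot>\<^sub>v x"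
      using eigenvector_outer_mat[OF ev] s by auto
    define z where "z = complex_of_real (sqrt ?s) * b"
    have "(cmod b)\<^sup>2 * ?s = 1"
      using unit sq_norm_smult[of b x] x by (simp add: sq_norm_def ub)
    then have "(cmod z)\<^sup>2 = 1"
      using s by (simp add: z_def norm_mult power_mult_distrib mult.commute)
    then have "cmod z = 1"
      using norm_ge_zero[of z] by (auto simp: power2_eq_1_iff)
    then have "z = exp (\<i> * complex_of_real (Arg z))"
      using rcis_cmod_Arg[of z] by (simp add: rcis_def cis_conv_exp)
    moreover have "v = z \<cdot>\<^sub>v x"
      by (simp add: v_eq ub lam z_def smult_smult_assoc)
    ultimately show ?thesis
      by metis
  qed
qed

section \<open>The rectangular window\<close>

lemma odd_if_coprime_Suc:
  fixes N n :: nat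
  assumes "coprime N n" and "coprime N (Suc n)"
  shows "odd N"
proof
  assume "even N"
  moreover have "even n \<or> even (Suc n)"
    by simp
  ultimately show False
    using assms by (auto dest: coprime_common_divisor)
qed

lemma unity_root_pow_ne_1:
  assumes "0 < k" "k < N" "coprime N j"
  shows "unity_root N (- int k) ^ j \<noteq> 1"
proof
  assume "unity_root N (- int k) ^ j = 1"
  then have "int N dvd - (int j * int k)"
    using assms by (simp add: unity_root_pow unity_root_eq_1_iff)
  then have "N dvd j * k"
    by (simp flip: of_nat_mult)
  then have "N dvd k"
    using \<open>coprime N j\<close> coprime_dvd_mult_right_iff by blast
  then show False
    using assms by (simp add: nat_dvd_not_less)
qed

lemma sum_power_atLeastLessThan:
  fixes q :: "'a :: comm_ring_1"
  assumes "a \<le> b"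
  shows "(1 - q) * (\<Sum>p\<in>{a..<b}. q ^ p) = q ^ a - q ^ b"
proof (cases "a = b")
  case False
  then obtain c where "b = Suc c" "a \<le> c"
    using assms by (cases b) auto
  then show ?thesis
    using sum_gp_multiplied[of a c q] by (simp add: atLeastLessThanSuc_atLeastAtMost)
qed simp

text \<open>The first interval is empty (truncated subtraction) when \<open>l + W \<le> N\<close>, the second when \<open>W \<le> l\<close>.\<close>
lemma LS_G_col_rect_window:
  assumes "W < N" "l < N" "p < N"
  shows "LS_G_col N (rect_window N W) l p = (if p \<in> {0..<l + W - N} \<union> {l..<W} then 1 else 0)"
  using assms per_less[of N "int p - int l"] unfolding LS_G_col_def rect_window_def
  by (auto simp: per_diff_eq)

lemma dft_LS_G_col_rect_window:
  assumes "W < N" "l < N"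
  shows "dft N (LS_G_col N (rect_window N W) l) k
       = (\<Sum>p\<in>{0..<l + W - N} \<union> {l..<W}. unity_root N (- int k) ^ p)"
proof -
  let ?S = "{0..<l + W - N} \<union> {l..<W}"
  have "dft N (LS_G_col N (rect_window N W) l) k = (\<Sum>p<N. if p \<in> ?S then unity_root N (- int k) ^ p else 0)"
    unfolding dft_def using assms
    by (intro sum.cong refl) (simp add: LS_G_col_rect_window unity_root_pow mult.commute)
  also have "\<dots> = (\<Sum>p\<in>{..<N} \<inter> ?S. unity_root N (- int k) ^ p)"
    by (simp add: sum.inter_restrict)
  also have "{..<N} \<inter> ?S = ?S"
    using assms by auto
  finally show ?thesis .
qed

lemma sum_power_rect_support_nonzero:
  fixes q :: complex
  assumes qN: "q ^ N = 1" and odd: "odd N" and W: "N < 2 * W" "W < N" and l: "l < N"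
    and no_root: "\<And>j. 2 * W - N \<le> j \<Longrightarrow> j \<le> W \<Longrightarrow> q ^ j \<noteq> 1"
  shows "(\<Sum>p\<in>{0..<l + W - N} \<union> {l..<W}. q ^ p) \<noteq> 0"
proof -
  let ?a = "l + W - N"
  have "q \<noteq> 0"
    using qN W by (auto simp: power_0_left)
  have qW: "q ^ W \<noteq> 1"
    using no_root W by simp
  have split: "(\<Sum>p\<in>{0..<?a} \<union> {l..<W}. q ^ p) = (\<Sum>p\<in>{0..<?a}. q ^ p) + (\<Sum>p\<in>{l..<W}. q ^ p)"
    using W by (intro sum.union_disjoint) auto
  have "(1 - q) * (\<Sum>p\<in>{0..<?a} \<union> {l..<W}. q ^ p) \<noteq> 0"
  proof (cases "l + W \<le> N")
    case True
    have "(1 - q) * (\<Sum>p\<in>{0..<?a} \<union> {l..<W}. q ^ p) = q ^ l - q ^ W"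
      using True W unfolding split by (simp add: sum_power_atLeastLessThan)
    also have "\<dots> = q ^ l * (1 - q ^ (W - l))"
      using True W by (simp add: algebra_simps flip: power_add)
    finally show ?thesis
      using \<open>q \<noteq> 0\<close> no_root[of "W - l"] True W by simp
  next
    case False
    show ?thesis
    proof (cases "l \<le> W")
      case True
      have "q ^ ?a = q ^ ?a * q ^ N"
        using qN by simp
      also have "\<dots> = q ^ l * q ^ W"
        using False by (simp flip: power_add)
      finally have qa: "q ^ ?a = q ^ l * q ^ W" .
      have "(1 - q) * (\<Sum>p\<in>{0..<?a} \<union> {l..<W}. q ^ p) = (1 - q ^ ?a) + (q ^ l - q ^ W)"
        using True unfolding split distrib_left by (simp add: sum_power_atLeastLessThan)
      also have "\<dots> = (1 + q ^ l) * (1 - q ^ W)"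
        unfolding qa by (simp add: algebra_simps)
      also have "\<dots> \<noteq> 0"
      proof -
        have "(q ^ l) ^ N = 1"
          using qN by (metis power_mult mult.commute power_one)
        then have "q ^ l \<noteq> - 1"
          using odd by force
        then have "1 + q ^ l \<noteq> 0"
          by (metis add.commute add_eq_0_iff)
        then show ?thesis
          using qW by simp
      qed
      finally show ?thesis .
    next
      case False
      then have "(1 - q) * (\<Sum>p\<in>{0..<?a} \<union> {l..<W}. q ^ p) = 1 - q ^ ?a"
        by (simp add: sum_power_atLeastLessThan)
      then show ?thesis
        using no_root[of ?a] False l W by simp
    qed
  qed
  then show ?thesis
    by auto
qed

lemma dft_LS_G_col_rect_window_nonzero:
  assumes W: "N < 2 * W" "W < N" and coprime: "\<forall>j \<in> {2 * W - N .. W}. coprime N j"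
    and "l < N" "k < N"
  shows "dft N (LS_G_col N (rect_window N W) l) k \<noteq> 0"
proof (cases "k = 0")
  case True
  have "l \<in> {l..<W} \<or> 0 \<in> {0..<l + W - N}"
    using W by auto
  then have "{0..<l + W - N} \<union> {l..<W} \<noteq> {}"
    by blast
  then show ?thesis
    using True W \<open>l < N\<close> by (simp add: dft_LS_G_col_rect_window)
next
  case False
  have "odd N"
    using coprime W by (intro odd_if_coprime_Suc[of N "W - 1"]) auto
  moreover have "unity_root N (- int k) ^ N = 1"
    using \<open>k < N\<close> by (simp add: unity_root_pow unity_root_eq_1_iff)
  ultimately show ?thesis
    unfolding dft_LS_G_col_rect_window[OF \<open>W < N\<close> \<open>l < N\<close>]
    using False W coprime \<open>l < N\<close> \<open>k < N\<close>
    by (intro sum_power_rect_support_nonzero unity_root_pow_ne_1) auto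
qed

theorem corollary1:
  fixes N W :: nat and x :: "complex vec"
  assumes "N \<ge> 2"
    and "N < 2 * W" and "W < N"
    and "\<forall>j \<in> {2 * W - N .. W}. coprime N j"
    and "x \<in> carrier_vec N"
  shows "(\<forall>l < N. invertible_mat (LS_G N (rect_window N W) l))
       \<and> (\<exists>v. LS_output N (rect_window N W)
                (\<lambda>m k. complex_of_real ((cmod (stft N (rect_window N W) x m k))\<^sup>2)) v)
       \<and> (\<forall>v. LS_output N (rect_window N W)
                (\<lambda>m k. complex_of_real ((cmod (stft N (rect_window N W) x m k))\<^sup>2)) v
              \<longrightarrow> (\<exists>phi :: real. v = exp (\<i> * complex_of_real phi) \<cdot>\<^sub>v x))"
proof -
  have N: "N > 0"
    using assms(1) by simp
  have dft_nonzero: "\<And>l k. l < N \<Longrightarrow> k < N \<Longrightarrow> dft N (LS_G_col N (rect_window N W) l) k \<noteq> 0"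
    using dft_LS_G_col_rect_window_nonzero assms(2-4) by blast
  have X: "LS_X N (rect_window N W) (\<lambda>m k. complex_of_real ((cmod (stft N (rect_window N W) x m k))\<^sup>2))
         = outer_mat x"
    by (rule LS_X_stft_sq[OF N assms(5) dft_nonzero])
  show ?thesis
    using LS_G_inverse(1)[OF N dft_nonzero] LS_output_exists_outer_mat[OF N assms(5) X]
      LS_output_outer_mat_unique_up_to_phase[OF assms(5) X] by blast
qed

end
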